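(* Assume (as is known) that $K_0(\mathcal{A}(\mathbb{C}P^2_q))\cong\mathbb{Z}^3\cong K^0(\mathcal{A}(\mathbb{C}P^2_q))$ and that the index pairing between even Fredholm modules and projections depends only on their classes. Then the classes $e_1=[1]$, $e_2=[P_{-1}]$ (the class of the left module $\Sigma_{0,1}\cong\mathcal{A}(\mathbb{C}P^2_q)^{3}P_{-1}$, equivalently of the right module $\Sigma_{0,-1}$) and $e_3=[P_1]$ (the class of the left module $\Sigma_{0,-1}$, equivalently of the right module $\Sigma_{0,1}$) form a $\mathbb{Z}$-basis of $K_0(\mathcal{A}(\mathbb{C}P^2_q))$, and the classes of the three even Fredholm modules $\varphi_1,\varphi_2,\varphi_3$ described below form a $\mathbb{Z}$-basis of $K^0(\mathcal{A}(\mathbb{C}P^2_q))$.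
   Context: Fix $0<q<1$. $\mathcal{A}(S^5_q)$ is the unital $*$-algebra generated by $z_1,z_2,z_3$ and adjoints with relations $z_iz_j=qz_jz_i$ ($i<j$), $z_i^*z_j=qz_jz_i^*$ ($i\ne j$), $[z_1^*,z_1]=0$, $[z_2^*,z_2]=(1-q^2)z_1z_1^*$, $[z_3^*,z_3]=(1-q^2)(z_1z_1^*+z_2z_2^* )$, $\sum_iz_iz_i^*=1$; it is $\mathbb{Z}$-graded by $\deg z_i=1,\deg z_i^*=-1$, $\Sigma_{0,N}$ is the degree-$N$ part and $\mathcal{A}(\mathbb{C}P^2_q)=\Sigma_{0,0}$ (generated by $p_{ij}=z_i^*z_j$). $P_{\pm1}=\Psi_{\pm1}\Psi_{\pm1}^\dagger$ are $3\times3$ projections where $\Psi_1=(z_1^*,z_2^*,z_3^* )^t$ (entries $\psi^1_{j,k,l}$ with $(\psi^1_{j,k,l})^*=z_1^jz_2^kz_3^l$, $j+k+l=1$) and $\Psi_{-1}$ has entries $\psi^{-1}_{j,k,l}$ with $(\psi^{-1}_{j,k,l})^*=q^{1+j-l}(z_1^jz_2^kz_3^l)^*$, $j+k+l=1$. The Fredholm modules: $\varphi_1$ has $\mathcal{H}=\mathbb{C}\oplus\mathbb{C}$, representation $a\mapsto\mathrm{diag}(\chi_0(a),0)$, $F=\begin{pmatrix}0&1\\1&0\end{pmatrix}$, grading $\mathrm{diag}(1,-1)$, where $\chi_0$ is the character $\chi_0(p_{ij})=\delta_{i3}\delta_{j3}$. $\varphi_2$ has $\mathcal{H}=\ell^2(\mathbb{N})\oplus\ell^2(\mathbb{N})$,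 representation $\mathrm{diag}(\chi_1(a),\chi_0(a)\mathrm{id})$, same $F$ and grading, where $\chi_1$ is the restriction of the representation of $\mathcal{A}(S^5_q)$ on $\ell^2(\mathbb{N})$ with $z_1\mapsto0$, $z_2|n\rangle=q^n|n\rangle$, $z_3|n\rangle=\sqrt{1-q^{2(n+1)}}|n+1\rangle$. $\varphi_3$ has $\mathcal{H}=\mathcal{H}'\oplus\mathcal{H}'$, representation $\pi_+\oplus\pi_-$, same $F$ and grading, where $\mathcal{H}'$ has orthonormal basis $|\ell,m\rangle$ ($\ell\in\frac12\mathbb{N}$, $\ell+m\in\mathbb{N}$); $\pi_-(z_1)=0$, $\pi_-(z_2)|\ell,m\rangle=q^{\ell+m}|\ell,m\rangle$, $\pi_-(z_3)|\ell,m\rangle=\sqrt{1-q^{2(\ell+m+1)}}|\ell,m+1\rangle$; $\pi_+(a)|\ell,m\rangle=\chi_2(a)|\ell,m\rangle$ for $m\le\ell$ and $=\chi_0(a)|\ell,m\rangle$ for $m>\ell$, with $\chi_2(z_1)|\ell,m\rangle=q^{2\ell}|\ell,m\rangle$, $\chi_2(z_2)|\ell,m\rangle=q^{\ell+m}\sqrt{1-q^{2(\ell-m+1)}}|\ell+\frac12,m-\frac12\rangle$, $\chi_2(z_3)|\ell,m\rangle=\sqrt{1-q^{2(\ell+m+1)}}|\ell+\frac12,m+\frac12\rangle$. The pairing of a class $[(\pi,\mathcal{H},F)]$ with a projection $e\in M_m(\mathcal{A})$ is $\frac12\mathrm{Tr}(\gamma F[F,e])$, which here equals $\mathrm{Tr}(\pi^+(e)-\pi^-(e))$.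 *)

theory Defs
  imports "HOL-Analysis.Analysis" "HOL-Library.Product_Plus"
begin

definition zmul :: "int \<Rightarrow> 'a::ab_group_add \<Rightarrow> 'a" where
  "zmul n x = (if 0 \<le> n then (((+) x) ^^ nat n) 0 else - ((((+) x) ^^ nat (- n)) 0))"

definition Zbasis3 :: "'a::ab_group_add \<Rightarrow> 'a \<Rightarrow> 'a \<Rightarrow> bool" where
  "Zbasis3 a b c = bij (\<lambda>(m::int, n::int, k::int). zmul m a + zmul n b + zmul k c)"

definition iso_Z3 :: "'a::ab_group_add itself \<Rightarrow> bool" where
  "iso_Z3 _ = (\<exists>h :: 'a \<Rightarrow> int \<times> int \<times> int. bij h \<and> (\<forall>x y. h (x + y) = h x + h y))"

section \<open>Operators on a Hilbert space with orthonormal basis indexed by 'b,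
  represented by their matrix coefficients  M i j = <e_i, T e_j>\<close>

type_synonym 'b opm = "'b \<Rightarrow> 'b \<Rightarrow> complex"

definition mmul :: "'b opm \<Rightarrow> 'b opm \<Rightarrow> 'b opm" where
  "mmul A B i j = (\<Sum>\<^sub>\<infinity>k. A i k * B k j)"

definition madj :: "'b opm \<Rightarrow> 'b opm" where
  "madj A i j = cnj (A j i)"

definition idm :: "'b opm" where
  "idm i j = (if i = j then 1 else 0)"

section \<open>Elements of A(CP^2_q) of the form c0*1 + sum c_ij p_ij  (p_ij = z_i^* z_j)\<close>

type_synonym elem = "complex \<times> (nat \<Rightarrow> nat \<Rightarrow> complex)"

definition pe :: "nat \<Rightarrow> nat \<Rightarrow> elem" where
  "pe a b = (0, \<lambda>i j. if i = a \<and> j = b then 1 else 0)"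

definition one_e :: elem where
  "one_e = (1, \<lambda>i j. 0)"

definition eadd :: "elem \<Rightarrow> elem \<Rightarrow> elem" where
  "eadd x y = (fst x + fst y, \<lambda>i j. snd x i j + snd y i j)"

definition escale :: "complex \<Rightarrow> elem \<Rightarrow> elem" where
  "escale s x = (s * fst x, \<lambda>i j. s * snd x i j)"

text \<open>z_a z_b^* rewritten in terms of the p_ij using the defining relations of A(S^5_q):
  for a \<noteq> b, z_a z_b^* = q^{-1} p_ba;  z_1 z_1^* = p_11;
  z_2 z_2^* = p_22 - (1-q^2) p_11;  z_3 z_3^* = p_33 - (1-q^2)(p_11 + p_22 - (1-q^2) p_11).\<close>
definition zzs :: "real \<Rightarrow> nat \<Rightarrow> nat \<Rightarrow> elem" where
  "zzs q a b =
    (if a \<noteq> b then escale (complex_of_real (1 / q)) (pe b a)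
     else if a = 1 then pe 1 1
     else if a = 2 then eadd (pe 2 2) (escale (complex_of_real (-(1 - q^2))) (pe 1 1))
     else eadd (pe 3 3) (escale (complex_of_real (-(1 - q^2)))
             (eadd (pe 1 1) (eadd (pe 2 2) (escale (complex_of_real (-(1 - q^2))) (pe 1 1))))))"

text \<open>Projections as (size, matrix of entries), indices 1..size.\<close>
type_synonym projm = "nat \<times> (nat \<Rightarrow> nat \<Rightarrow> elem)"

text \<open>P_1 = Psi_1 Psi_1^dagger with Psi_1 = (z_1^*, z_2^*, z_3^*)^t: entries z_a^* z_b = p_ab.\<close>
definition P_plus1 :: projm where
  "P_plus1 = (3, \<lambda>a b. pe a b)"

text \<open>Psi_{-1} has entries psi_a = c_a z_a, c = (q^2, q, 1); P_{-1} entries c_a c_b z_a z_b^*.\<close>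
definition cm1 :: "real \<Rightarrow> nat \<Rightarrow> real" where
  "cm1 q a = (if a = 1 then q^2 else if a = 2 then q else 1)"

definition P_minus1 :: "real \<Rightarrow> projm" where
  "P_minus1 q = (3, \<lambda>a b. escale (complex_of_real (cm1 q a * cm1 q b)) (zzs q a b))"

definition P_one :: projm where
  "P_one = (1, \<lambda>a b. one_e)"

text \<open>The three projections 1, P_{-1}, P_1 (giving e_1, e_2, e_3).\<close>
definition proj :: "real \<Rightarrow> nat \<Rightarrow> projm" where
  "proj q j = (if j = 1 then P_one else if j = 2 then P_minus1 q else P_plus1)"

text \<open>A representation is given by the image of 1 and of the generators p_ij.\<close>
type_synonym 'b repn = "'b opm \<times> (nat \<Rightarrow> nat \<Rightarrow> 'b opm)"

definition evalr :: "'b repn \<Rightarrow> elem \<Rightarrow> 'b opm" where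
  "evalr r x i j = fst x * fst r i j + (\<Sum>a\<in>{1,2,3}. \<Sum>b\<in>{1,2,3}. snd x a b * snd r a b i j)"

text \<open>Restriction to A(CP^2_q) of a representation of A(S^5_q) given by images Z of z_1,z_2,z_3:
  p_ab = z_a^* z_b.\<close>
definition s5rep :: "'b opm \<Rightarrow> (nat \<Rightarrow> 'b opm) \<Rightarrow> 'b repn" where
  "s5rep U Z = (U, \<lambda>a b. mmul (madj (Z a)) (Z b))"

definition chi0rep :: "'b opm \<Rightarrow> 'b repn" where
  "chi0rep E = (E, \<lambda>a b. if a = 3 \<and> b = 3 then E else (\<lambda>i j. 0))"

definition zero_rep :: "'b repn" where
  "zero_rep = ((\<lambda>i j. 0), \<lambda>a b i j. 0)"

text \<open>Pairing Tr(pi^+(e) - pi^-(e)) for a projection e in M_n(A), trace over H \<otimes> C^n.\<close>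
definition index_pairing :: "'b repn \<Rightarrow> 'b repn \<Rightarrow> projm \<Rightarrow> complex" where
  "index_pairing rp rm e =
     (\<Sum>\<^sub>\<infinity>(a, i) \<in> {1..fst e} \<times> UNIV.
        evalr rp (snd e a a) i i - evalr rm (snd e a a) i i)"

subsection \<open>phi_1: H = C + C, pi^+ = chi_0, pi^- = 0\<close>

definition phi1_plus :: "unit repn" where "phi1_plus = chi0rep idm"
definition phi1_minus :: "unit repn" where "phi1_minus = zero_rep"

subsection \<open>phi_2: H = l2(N) + l2(N), pi^+ = chi_1, pi^- = chi_0 id\<close>

definition chi1Z :: "real \<Rightarrow> nat \<Rightarrow> nat opm" where
  "chi1Z q a i j =
    (if a = 2 then (if i = j then complex_of_real (q ^ j) else 0)
     else if a = 3 then (if i = Suc j then complex_of_real (sqrt (1 - q ^ (2 * (j + 1)))) else 0)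
     else 0)"

definition phi2_plus :: "real \<Rightarrow> nat repn" where "phi2_plus q = s5rep idm (chi1Z q)"
definition phi2_minus :: "nat repn" where "phi2_minus = chi0rep idm"

subsection \<open>phi_3: H = H' + H'.  The basis vector |l,m> of H' (l \<in> N/2, l+m \<in> N) is
  encoded as the pair (2l, l+m) :: nat \<times> nat; thus m \<le> l iff  snd \<le> fst.\<close>

definition piminusZ :: "real \<Rightarrow> nat \<Rightarrow> (nat \<times> nat) opm" where
  "piminusZ q a i j =
    (if a = 2 then (if i = j then complex_of_real (q ^ snd j) else 0)
     else if a = 3 then (if i = (fst j, Suc (snd j))
                         then complex_of_real (sqrt (1 - q ^ (2 * (snd j + 1)))) else 0)
     else 0)"

text \<open>chi_2 acting on the invariant subspace spanned by |l,m> with m \<le> l (zero on the complement).\<close>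
definition chi2Z :: "real \<Rightarrow> nat \<Rightarrow> (nat \<times> nat) opm" where
  "chi2Z q a i j =
    (if snd j \<le> fst j then
       (if a = 1 then (if i = j then complex_of_real (q ^ fst j) else 0)
        else if a = 2 then (if i = (Suc (fst j), snd j)
              then complex_of_real (q ^ snd j * sqrt (1 - q ^ (2 * (fst j - snd j + 1)))) else 0)
        else if a = 3 then (if i = (Suc (fst j), Suc (snd j))
              then complex_of_real (sqrt (1 - q ^ (2 * (snd j + 1)))) else 0)
        else 0)
     else 0)"

definition Qhigh :: "(nat \<times> nat) opm" where
  "Qhigh i j = (if i = j \<and> fst j < snd j then 1 else 0)"

text \<open>pi^+ = chi_2 on {m \<le> l}, chi_0 on {m > l}.\<close>
definition phi3_plus :: "real \<Rightarrow> (nat \<times> nat) repn" where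
  "phi3_plus q = (idm, \<lambda>a b i j. snd (s5rep idm (chi2Z q)) a b i j + snd (chi0rep Qhigh) a b i j)"

definition phi3_minus :: "real \<Rightarrow> (nat \<times> nat) repn" where
  "phi3_minus q = s5rep idm (piminusZ q)"

end

theory Submission
  imports Defs
begin

text \<open>
  The nine pairings between the Fredholm modules \<open>\<phi>\<^sub>1, \<phi>\<^sub>2, \<phi>\<^sub>3\<close> and the
  projections \<open>1, P\<^sub>-\<^sub>1, P\<^sub>1\<close> are computed explicitly; they form the unimodular matrix
  \<open>((1,1,1), (0,-1,1), (0,0,1))\<close>.  A pairing of two groups isomorphic to \<open>\<int>\<^sup>3\<close> whose matrix on
  two triples is invertible over \<open>\<int>\<close> forces both triples to be \<open>\<int>\<close>-bases.

  The analytic part then reduces every pairing with a projection whose diagonal entries are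
  combinations of \<open>1\<close> and the \<open>p\<^sub>b\<^sub>b\<close> to a linear combination of the "traces"
  \<open>\<Sum>\<^sub>i \<langle>i|\<pi>\<^sup>+(p\<^sub>b\<^sub>b) - \<pi>\<^sup>-(p\<^sub>b\<^sub>b)|i\<rangle>\<close>.  These traces are computed for each module from the diagonal
  matrix coefficients of \<open>z\<^sub>b\<^sup>* z\<^sub>b\<close> (geometric series in \<open>q\<^sup>2\<close>, double series over the two
  sectors \<open>m \<le> l\<close>, \<open>m > l\<close> for \<open>\<phi>\<^sub>3\<close>), the coefficients of the projections are read off, and
  the resulting rational identities in \<open>q\<^sup>2\<close> give the matrix.
\<close>


lemma additive_zero:
  fixes h :: "'a::ab_group_add \<Rightarrow> 'b::ab_group_add"
  assumes "\<And>x y. h (x + y) = h x + h y"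
  shows "h 0 = 0"
  using assms[of 0 0] by simp

lemma additive_uminus:
  fixes h :: "'a::ab_group_add \<Rightarrow> 'b::ab_group_add"
  assumes "\<And>x y. h (x + y) = h x + h y"
  shows "h (- x) = - h x"
proof -
  have "h x + h (- x) = 0" using assms[of x "- x"] additive_zero[OF assms] by simp
  then show ?thesis by (metis minus_unique)
qed

lemma additive_zmul:
  fixes h :: "'a::ab_group_add \<Rightarrow> 'b::ab_group_add"
  assumes add: "\<And>x y. h (x + y) = h x + h y"
  shows "h (zmul m x) = zmul m (h x)"
proof -
  have iter: "h ((((+) x) ^^ n) 0) = (((+) (h x)) ^^ n) 0" for n
    by (induction n) (simp_all add: add additive_zero[OF add])
  show ?thesis
    unfolding zmul_def by (simp add: iter additive_uminus[OF add])
qed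

lemma zmul_ring_1: "zmul m (a :: 'a::ring_1) = of_int m * a"
proof -
  have iter: "(((+) a) ^^ n) 0 = of_nat n * a" for n
    by (induction n) (simp_all add: algebra_simps)
  show ?thesis
    unfolding zmul_def iter by simp
qed

lemma zmul_prod: "zmul m (a, b) = (zmul m a, zmul m b)"
proof -
  have "fst (zmul m (a, b)) = zmul m a" "snd (zmul m (a, b)) = zmul m b"
    using additive_zmul[of fst m "(a, b)"] additive_zmul[of snd m "(a, b)"] by simp_all
  then show ?thesis by (metis prod.collapse)
qed

lemma zmul_Z3: "zmul m (v :: int \<times> int \<times> int) = (m * fst v, m * fst (snd v), m * snd (snd v))"
  by (cases v) (simp add: zmul_prod zmul_ring_1)

lemma zmul_Z3_add: "zmul (m + n) (v :: int \<times> int \<times> int) = zmul m v + zmul n v"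
  by (cases v) (simp add: zmul_Z3 algebra_simps)

section \<open>Left-invertible endomorphisms of \<open>\<int>\<^sup>3\<close>\<close>

text \<open>An additive map on \<open>\<int>\<^sup>3\<close> extends to a real-linear map on \<open>\<real>\<^sup>3\<close>, determined by the images of
  the standard basis vectors.  Finite-dimensionality over \<open>\<real>\<close> turns a left inverse into a
  two-sided one.\<close>

definition real_point :: "int \<times> int \<times> int \<Rightarrow> real \<times> real \<times> real" where
  "real_point v = (of_int (fst v), of_int (fst (snd v)), of_int (snd (snd v)))"

definition real_extension ::
    "(int \<times> int \<times> int \<Rightarrow> int \<times> int \<times> int) \<Rightarrow> real \<times> real \<times> real \<Rightarrow> real \<times> real \<times> real" where
  "real_extension g w = fst w *\<^sub>R real_point (g (1, 0, 0)) + fst (snd w) *\<^sub>R real_point (g (0, 1, 0))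
     + snd (snd w) *\<^sub>R real_point (g (0, 0, 1))"

lemma real_extension_linear: "linear (real_extension g)"
  by (rule linearI) (auto simp: real_extension_def algebra_simps)

lemma real_point_basis: "w = fst w *\<^sub>R real_point (1, 0, 0) + fst (snd w) *\<^sub>R real_point (0, 1, 0)
     + snd (snd w) *\<^sub>R real_point (0, 0, 1)"
  by (cases w) (simp add: real_point_def)

lemma real_extension_real_point:
  assumes add: "\<And>x y. g (x + y) = g x + g y"
  shows "real_extension g (real_point v) = real_point (g v)"
proof -
  obtain a b c where v: "v = (a, b, c)" by (cases v) auto
  have "v = zmul a (1, 0, 0) + zmul b (0, 1, 0) + zmul c (0, 0, 1)"
    by (simp add: v zmul_Z3)
  then have "g v = zmul a (g (1, 0, 0)) + zmul b (g (0, 1, 0)) + zmul c (g (0, 0, 1))"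
    by (metis add additive_zmul)
  then show ?thesis
    by (simp add: v real_extension_def real_point_def zmul_Z3)
qed

lemma Z3_left_invertible_bij:
  fixes A L :: "int \<times> int \<times> int \<Rightarrow> int \<times> int \<times> int"
  assumes A_add: "\<And>x y. A (x + y) = A x + A y"
    and L_add: "\<And>x y. L (x + y) = L x + L y"
    and L_A: "\<And>v. L (A v) = v"
  shows "bij A"
proof -
  let ?A = "real_extension A" and ?L = "real_extension L"
  have lin: "linear ?A" "linear ?L" by (rule real_extension_linear)+
  have on_basis: "?L (?A (real_point v)) = real_point v" for v
    by (simp add: real_extension_real_point A_add L_add L_A)
  have lin_LA: "linear (?L \<circ> ?A)" by (rule linear_compose[OF lin])
  have "?L (?A w) = w" for w
  proof -
    let ?x = "fst w" and ?y = "fst (snd w)" and ?z = "snd (snd w)"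
    have "(?L \<circ> ?A) w = (?L \<circ> ?A) (?x *\<^sub>R real_point (1, 0, 0) + ?y *\<^sub>R real_point (0, 1, 0)
        + ?z *\<^sub>R real_point (0, 0, 1))"
      using real_point_basis[of w] by simp
    also have "\<dots> = ?x *\<^sub>R (?L \<circ> ?A) (real_point (1, 0, 0)) + ?y *\<^sub>R (?L \<circ> ?A) (real_point (0, 1, 0))
        + ?z *\<^sub>R (?L \<circ> ?A) (real_point (0, 0, 1))"
      by (simp only: linear_add[OF lin_LA] linear_scale[OF lin_LA])
    also have "\<dots> = w"
      using real_point_basis[of w] by (simp only: comp_apply on_basis)
    finally show ?thesis by simp
  qed
  then have "inj ?A" by (metis injI)
  then have "surj ?A" using linear_injective_imp_surjective[OF lin(1)] by simp
  then have A_L: "?A (?L w) = w" for w by (metis \<open>\<And>w. ?L (?A w) = w\<close> surjD)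
  have "real_point (A (L v)) = real_point v" for v
    using A_L[of "real_point v"] by (simp add: real_extension_real_point A_add L_add)
  then have "A (L v) = v" for v
    by (simp add: real_point_def prod_eq_iff)
  then show ?thesis by (metis L_A bijI injI surjI)
qed

section \<open>A basis criterion and dual bases\<close>

lemma Zbasis3_criterion:
  fixes x1 x2 x3 :: "'a::ab_group_add" and Phi :: "'a \<Rightarrow> int \<times> int \<times> int"
    and N M :: "int \<times> int \<times> int \<Rightarrow> int \<times> int \<times> int"
  assumes "iso_Z3 TYPE('a)"
    and Phi_add: "\<And>x y. Phi (x + y) = Phi x + Phi y"
    and Phi_comb: "\<And>m n k. Phi (zmul m x1 + zmul n x2 + zmul k x3) = N (m, n, k)"
    and M_N: "\<And>v. M (N v) = v"
    and M_add: "\<And>v w. M (v + w) = M v + M w"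
  shows "Zbasis3 x1 x2 x3"
proof -
  obtain h :: "'a \<Rightarrow> int \<times> int \<times> int" where h: "bij h" and h_add: "\<And>x y. h (x + y) = h x + h y"
    using \<open>iso_Z3 TYPE('a)\<close> unfolding iso_Z3_def by blast
  define E where "E = (\<lambda>(m::int, n::int, k::int). zmul m x1 + zmul n x2 + zmul k x3)"
  have hE: "h (E (m, n, k)) = zmul m (h x1) + zmul n (h x2) + zmul k (h x3)" for m n k
    by (simp add: E_def h_add additive_zmul[OF h_add])
  have hE_add: "h (E (v + w)) = h (E v) + h (E w)" for v w
    by (cases v, cases w) (simp add: hE zmul_Z3_add ac_simps)
  have inv_h: "inv h (h x) = x" "h (inv h y) = y" for x y
    using h by (simp_all add: bij_is_inj bij_is_surj surj_f_inv_f)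
  have inv_h_add: "inv h (y + y') = inv h y + inv h y'" for y y'
    by (metis h_add inv_h)
  have "bij (h \<circ> E)"
  proof (rule Z3_left_invertible_bij[where L = "\<lambda>y. M (Phi (inv h y))"])
    show "(h \<circ> E) (v + w) = (h \<circ> E) v + (h \<circ> E) w" for v w by (simp add: hE_add)
    show "M (Phi (inv h (y + y'))) = M (Phi (inv h y)) + M (Phi (inv h y'))" for y y'
      by (simp add: inv_h_add Phi_add M_add)
    show "M (Phi (inv h ((h \<circ> E) v))) = v" for v
      by (cases v) (simp add: inv_h E_def Phi_comb M_N)
  qed
  then have "bij (inv h \<circ> (h \<circ> E))" by (rule bij_comp[OF _ bij_imp_bij_inv[OF h]])
  moreover have "inv h \<circ> (h \<circ> E) = E" by (simp add: fun_eq_iff inv_h)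
  ultimately show ?thesis unfolding Zbasis3_def E_def by simp
qed

text \<open>A biadditive integer pairing whose matrix on \<open>e\<^sub>1,e\<^sub>2,e\<^sub>3\<close> and \<open>f\<^sub>1,f\<^sub>2,f\<^sub>3\<close> is the unimodular
  matrix \<open>((1,1,1), (0,-1,1), (0,0,1))\<close> makes both triples bases: row and column evaluations
  \<open>x \<mapsto> (pair (f i) x)\<^sub>i\<close> and \<open>y \<mapsto> (pair y (e j))\<^sub>j\<close> have explicit integral inverses.\<close>
lemma dual_bases_from_pairing:
  fixes e :: "nat \<Rightarrow> 'k0::ab_group_add" and f :: "nat \<Rightarrow> 'k1::ab_group_add"
    and pair :: "'k1 \<Rightarrow> 'k0 \<Rightarrow> int"
  assumes "iso_Z3 TYPE('k0)" and "iso_Z3 TYPE('k1)"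
    and add_left: "\<forall>x y z. pair (x + y) z = pair x z + pair y z"
    and add_right: "\<forall>x y z. pair x (y + z) = pair x y + pair x z"
    and row1: "\<And>j. j \<in> {1,2,3} \<Longrightarrow> pair (f 1) (e j) = 1"
    and row2: "\<And>j. j \<in> {1,2,3} \<Longrightarrow> pair (f 2) (e j) = (if j = 1 then 0 else if j = 2 then -1 else 1)"
    and row3: "\<And>j. j \<in> {1,2,3} \<Longrightarrow> pair (f 3) (e j) = (if j = 3 then 1 else 0)"
  shows "Zbasis3 (e 1) (e 2) (e 3) \<and> Zbasis3 (f 1) (f 2) (f 3)"
proof
  have zmul_right: "pair y (zmul m x) = m * pair y x" for y x m
    using additive_zmul[of "pair y" m x] add_right by (simp add: zmul_ring_1)
  have zmul_left: "pair (zmul m y) x = m * pair y x" for y x m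
    using additive_zmul[of "\<lambda>y. pair y x" m y] add_left by (simp add: zmul_ring_1)
  have vals: "pair (f 1) (e 1) = 1" "pair (f 1) (e 2) = 1" "pair (f 1) (e 3) = 1"
    "pair (f 2) (e 1) = 0" "pair (f 2) (e 2) = -1" "pair (f 2) (e 3) = 1"
    "pair (f 3) (e 1) = 0" "pair (f 3) (e 2) = 0" "pair (f 3) (e 3) = 1"
    using row1 row2 row3 by simp_all
  show "Zbasis3 (e 1) (e 2) (e 3)"
    by (rule Zbasis3_criterion[where Phi = "\<lambda>x. (pair (f 1) x, pair (f 2) x, pair (f 3) x)"
          and N = "\<lambda>(m, n, k). (m + n + k, k - n, k)" and M = "\<lambda>(a, b, c). (a + b - 2 * c, c - b, c)"])
      (use assms(1) add_right in \<open>auto simp: zmul_right vals vals[unfolded One_nat_def] split: prod.splits\<close>)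
  show "Zbasis3 (f 1) (f 2) (f 3)"
    by (rule Zbasis3_criterion[where Phi = "\<lambda>y. (pair y (e 1), pair y (e 2), pair y (e 3))"
          and N = "\<lambda>(m, n, k). (m, m - n, m + n + k)" and M = "\<lambda>(a, b, c). (a, a - b, c - 2 * a + b)"])
      (use assms(2) add_left in \<open>auto simp: zmul_left vals vals[unfolded One_nat_def] split: prod.splits\<close>)
qed

lemma geometric_has_sum:
  fixes s :: real assumes "0 \<le> s" "s < 1"
  shows "((\<lambda>n. s ^ n) has_sum 1 / (1 - s)) UNIV"
  by (rule sums_nonneg_imp_has_sum) (use assms geometric_sums[of s] in auto)

lemma geometric_deriv_has_sum:
  fixes s :: real assumes "0 \<le> s" "s < 1"
  shows "((\<lambda>n. real (Suc n) * s ^ n) has_sum 1 / (1 - s)\<^sup>2) UNIV"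
  by (rule sums_nonneg_imp_has_sum) (use assms geometric_deriv_sums[of s] in auto)

lemma has_sum_finite_sum:
  fixes f :: "'i \<Rightarrow> 'a \<Rightarrow> 'c::topological_comm_monoid_add"
  assumes "finite B" and "\<And>b. b \<in> B \<Longrightarrow> (f b has_sum T b) A"
  shows "((\<lambda>x. \<Sum>b\<in>B. f b x) has_sum (\<Sum>b\<in>B. T b)) A"
  using assms
proof (induction B rule: finite_induct)
  case empty
  then show ?case by simp
next
  case (insert b B)
  have "((\<lambda>x. f b x + (\<Sum>b\<in>B. f b x)) has_sum T b + (\<Sum>b\<in>B. T b)) A"
    by (rule has_sum_add) (use insert in auto)
  then show ?case using insert by simp
qed

lemma has_sum_finite_Sigma:
  fixes g :: "'a \<times> 'b \<Rightarrow> 'c::topological_comm_monoid_add"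
  assumes "finite B" and "\<And>b. b \<in> B \<Longrightarrow> ((\<lambda>i. g (b, i)) has_sum T b) A"
  shows "(g has_sum (\<Sum>b\<in>B. T b)) (B \<times> A)"
  using assms
proof (induction B rule: finite_induct)
  case empty
  then show ?case by simp
next
  case (insert b B)
  have "(g has_sum T b) (Pair b ` A)"
    using insert.prems[of b] by (subst has_sum_reindex) (auto simp: inj_on_def o_def)
  moreover have "Pair b ` A = {b} \<times> A" by auto
  ultimately have "(g has_sum (T b + (\<Sum>b\<in>B. T b))) ({b} \<times> A \<union> B \<times> A)"
    using insert by (intro has_sum_Un_disjoint) auto
  moreover have "{b} \<times> A \<union> B \<times> A = insert b B \<times> A" by auto
  ultimately show ?case using insert by simp
qed

section \<open>Index pairing with diagonal projections\<close>

definition unit_diff :: "'b repn \<Rightarrow> 'b repn \<Rightarrow> 'b \<Rightarrow> complex" where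
  "unit_diff rp rm i = fst rp i i - fst rm i i"

definition gen_diff :: "'b repn \<Rightarrow> 'b repn \<Rightarrow> nat \<Rightarrow> 'b \<Rightarrow> complex" where
  "gen_diff rp rm b i = snd rp b b i i - snd rm b b i i"

definition diagonal_proj :: "projm \<Rightarrow> bool" where
  "diagonal_proj e \<longleftrightarrow> (\<forall>a\<in>{1..fst e}. \<forall>b c. b \<noteq> c \<longrightarrow> snd (snd e a a) b c = 0)"

definition unit_coeff :: "projm \<Rightarrow> complex" where
  "unit_coeff e = (\<Sum>a\<in>{1..fst e}. fst (snd e a a))"

definition gen_coeff :: "projm \<Rightarrow> nat \<Rightarrow> complex" where
  "gen_coeff e b = (\<Sum>a\<in>{1..fst e}. snd (snd e a a) b b)"

lemma evalr_diff_diagonal: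
  assumes "\<And>b c. b \<noteq> c \<Longrightarrow> snd x b c = 0"
  shows "evalr rp x i i - evalr rm x i i
    = fst x * unit_diff rp rm i + (\<Sum>b\<in>{1,2,3}. snd x b b * gen_diff rp rm b i)"
  by (simp add: evalr_def unit_diff_def gen_diff_def assms algebra_simps)

lemma index_pairing_diagonal:
  assumes diag: "diagonal_proj e"
    and unit: "(unit_diff rp rm has_sum T0) UNIV"
    and gens: "\<And>b. b \<in> {1,2,3} \<Longrightarrow> (gen_diff rp rm b has_sum T b) UNIV"
  shows "index_pairing rp rm e = unit_coeff e * T0 + (\<Sum>b\<in>{1,2,3}. gen_coeff e b * T b)"
proof -
  let ?entry = "\<lambda>a. snd e a a"
  have row: "((\<lambda>i. evalr rp (?entry a) i i - evalr rm (?entry a) i i) has_sum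
      fst (?entry a) * T0 + (\<Sum>b\<in>{1,2,3}. snd (?entry a) b b * T b)) UNIV"
    if "a \<in> {1..fst e}" for a
  proof -
    have "(\<lambda>i. evalr rp (?entry a) i i - evalr rm (?entry a) i i)
        = (\<lambda>i. fst (?entry a) * unit_diff rp rm i + (\<Sum>b\<in>{1,2,3}. snd (?entry a) b b * gen_diff rp rm b i))"
      using diag that by (intro ext evalr_diff_diagonal) (auto simp: diagonal_proj_def)
    moreover have "((\<lambda>i. \<Sum>b\<in>{1,2,3}. snd (?entry a) b b * gen_diff rp rm b i) has_sum
        (\<Sum>b\<in>{1,2,3}. snd (?entry a) b b * T b)) UNIV"
      by (intro has_sum_finite_sum has_sum_cmult_right gens) simp_all
    ultimately show ?thesis
      using has_sum_add[OF has_sum_cmult_right[OF unit]] by simp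
  qed
  have "((\<lambda>(a, i). evalr rp (?entry a) i i - evalr rm (?entry a) i i) has_sum
      (\<Sum>a\<in>{1..fst e}. fst (?entry a) * T0 + (\<Sum>b\<in>{1,2,3}. snd (?entry a) b b * T b))) ({1..fst e} \<times> UNIV)"
    by (rule has_sum_finite_Sigma) (use row in auto)
  moreover have "(\<Sum>a\<in>{1..fst e}. fst (?entry a) * T0 + (\<Sum>b\<in>{1,2,3}. snd (?entry a) b b * T b))
      = unit_coeff e * T0 + (\<Sum>b\<in>{1,2,3}. gen_coeff e b * T b)"
    by (simp add: unit_coeff_def gen_coeff_def sum.distrib sum_distrib_right sum.swap[of _ "{1..fst e}"])
  ultimately show ?thesis
    unfolding index_pairing_def by (simp add: infsumI)
qed

lemma adj_mult_diag_single:
  assumes "\<And>k. k \<noteq> p \<Longrightarrow> Z k i = 0" and "Z p i = complex_of_real r"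
  shows "mmul (madj Z) Z i i = complex_of_real (r\<^sup>2)"
  unfolding mmul_def madj_def
  by (rule infsumI, rule has_sum_finite_neutralI[of "{p}"]) (auto simp: assms power2_eq_square)

lemma sqrt_one_minus_power_sq:
  fixes q :: real
  assumes "0 < q" "q < 1"
  shows "(sqrt (1 - q ^ (2 * (n + 1))))\<^sup>2 = 1 - (q\<^sup>2) ^ Suc n"
proof -
  have "q ^ (2 * (n + 1)) \<le> 1" using assms by (intro power_le_one) auto
  moreover have "q ^ (2 * (n + 1)) = (q\<^sup>2) ^ Suc n" by (simp only: power_mult Suc_eq_plus1)
  ultimately show ?thesis by (metis real_sqrt_pow2 diff_ge_0_iff_ge)
qed

lemma power_even_swap: "((x::real)\<^sup>2) ^ n = (x ^ n)\<^sup>2"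
  by (simp add: power_mult[symmetric] mult.commute)

section \<open>The Fredholm module \<open>\<phi>\<^sub>1\<close>\<close>

lemma phi1_diffs:
  "unit_diff phi1_plus phi1_minus = (\<lambda>i. 1)"
  "gen_diff phi1_plus phi1_minus b = (\<lambda>i. if b = 3 then 1 else 0)"
  by (simp_all add: fun_eq_iff unit_diff_def gen_diff_def phi1_plus_def phi1_minus_def chi0rep_def
      zero_rep_def idm_def)

lemma phi1_pairing:
  assumes "diagonal_proj e"
  shows "index_pairing phi1_plus phi1_minus e = unit_coeff e + gen_coeff e 3"
proof -
  have "index_pairing phi1_plus phi1_minus e
      = unit_coeff e * 1 + (\<Sum>b\<in>{1,2,3}. gen_coeff e b * (if b = 3 then 1 else 0))"
    by (rule index_pairing_diagonal[OF assms]) (auto intro!: has_sum_finiteI simp: phi1_diffs UNIV_unit)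
  then show ?thesis by simp
qed

section \<open>The Fredholm module \<open>\<phi>\<^sub>2\<close>\<close>

lemma phi2_plus_diag:
  assumes "0 < q" "q < 1"
  shows "snd (phi2_plus q) b b i i =
    (if b = 2 then of_real ((q\<^sup>2) ^ i) else if b = 3 then of_real (1 - (q\<^sup>2) ^ Suc i) else 0)"
proof -
  have "mmul (madj (chi1Z q 2)) (chi1Z q 2) i i = of_real ((q\<^sup>2) ^ i)"
    unfolding power_even_swap
    by (rule adj_mult_diag_single[where p = i]) (auto simp: chi1Z_def)
  moreover have "mmul (madj (chi1Z q 3)) (chi1Z q 3) i i = of_real (1 - (q\<^sup>2) ^ Suc i)"
    unfolding sqrt_one_minus_power_sq[OF assms, symmetric]
    by (rule adj_mult_diag_single[where p = "Suc i"]) (auto simp: chi1Z_def)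
  moreover have "b \<noteq> 2 \<Longrightarrow> b \<noteq> 3 \<Longrightarrow> mmul (madj (chi1Z q b)) (chi1Z q b) i i = of_real (0\<^sup>2)"
    by (rule adj_mult_diag_single[where p = i]) (auto simp: chi1Z_def)
  ultimately show ?thesis
    by (simp add: phi2_plus_def s5rep_def)
qed

lemma phi2_diffs:
  assumes "0 < q" "q < 1"
  shows "unit_diff (phi2_plus q) phi2_minus = (\<lambda>i. 0)"
    and "gen_diff (phi2_plus q) phi2_minus b = (\<lambda>i.
      if b = 2 then of_real ((q\<^sup>2) ^ i) else if b = 3 then of_real (- (q\<^sup>2 * (q\<^sup>2) ^ i)) else 0)"
   apply (simp add: fun_eq_iff unit_diff_def phi2_plus_def phi2_minus_def s5rep_def chi0rep_def)
  by (simp add: fun_eq_iff gen_diff_def phi2_plus_diag[OF assms] phi2_minus_def chi0rep_def idm_def)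

text \<open>The traces of \<open>\<phi>\<^sub>2\<close> are geometric series in \<open>q\<^sup>2\<close>.\<close>
lemma phi2_pairing:
  assumes "0 < q" "q < 1" and "diagonal_proj e"
  shows "index_pairing (phi2_plus q) phi2_minus e
    = gen_coeff e 2 * of_real (1 / (1 - q\<^sup>2)) + gen_coeff e 3 * of_real (- (q\<^sup>2 / (1 - q\<^sup>2)))"
proof -
  let ?s = "q\<^sup>2"
  have s: "0 \<le> ?s" "?s < 1" using assms by (simp_all add: power_less_one_iff)
  have geo: "((\<lambda>i. of_real (c * ?s ^ i) :: complex) has_sum of_real (c * (1 / (1 - ?s)))) UNIV" for c
    by (intro has_sum_of_real has_sum_cmult_right geometric_has_sum[OF s])
  let ?T = "\<lambda>b::nat. if b = 2 then of_real (1 / (1 - ?s)) else if b = 3 then of_real (- (?s / (1 - ?s))) else 0"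
  have "index_pairing (phi2_plus q) phi2_minus e = unit_coeff e * 0 + (\<Sum>b\<in>{1,2,3}. gen_coeff e b * ?T b)"
  proof (rule index_pairing_diagonal[OF assms(3)])
    show "(unit_diff (phi2_plus q) phi2_minus has_sum 0) UNIV"
      by (simp add: phi2_diffs(1)[OF assms(1,2)])
    show "(gen_diff (phi2_plus q) phi2_minus b has_sum ?T b) UNIV" if "b \<in> {1,2,3}" for b
      using that geo[of 1] geo[of "- ?s"] by (auto simp: phi2_diffs(2)[OF assms(1,2)])
  qed
  then show ?thesis by simp
qed

section \<open>The Fredholm module \<open>\<phi>\<^sub>3\<close>\<close>

lemma phi3_minus_diag:
  assumes "0 < q" "q < 1"
  shows "snd (phi3_minus q) b b (L, M) (L, M) =
    (if b = 2 then of_real ((q\<^sup>2) ^ M) else if b = 3 then of_real (1 - (q\<^sup>2) ^ Suc M) else 0)"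
proof -
  have "mmul (madj (piminusZ q 2)) (piminusZ q 2) (L, M) (L, M) = of_real ((q\<^sup>2) ^ M)"
    unfolding power_even_swap
    by (rule adj_mult_diag_single[where p = "(L, M)"]) (auto simp: piminusZ_def)
  moreover have "mmul (madj (piminusZ q 3)) (piminusZ q 3) (L, M) (L, M) = of_real (1 - (q\<^sup>2) ^ Suc M)"
    unfolding sqrt_one_minus_power_sq[OF assms, symmetric]
    by (rule adj_mult_diag_single[where p = "(L, Suc M)"]) (auto simp: piminusZ_def)
  moreover have "b \<noteq> 2 \<Longrightarrow> b \<noteq> 3 \<Longrightarrow> mmul (madj (piminusZ q b)) (piminusZ q b) (L, M) (L, M) = of_real (0\<^sup>2)"
    by (rule adj_mult_diag_single[where p = "(L, M)"]) (auto simp: piminusZ_def)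
  ultimately show ?thesis
    by (simp add: phi3_minus_def s5rep_def)
qed

lemma phi3_plus_diag:
  assumes "0 < q" "q < 1"
  shows "snd (phi3_plus q) b b (L, M) (L, M) =
    (if M \<le> L then
       (if b = 1 then of_real ((q\<^sup>2) ^ L) else if b = 2 then of_real ((q\<^sup>2) ^ M - (q\<^sup>2) ^ Suc L)
        else if b = 3 then of_real (1 - (q\<^sup>2) ^ Suc M) else 0)
     else if b = 3 then 1 else 0)"
proof (cases "M \<le> L")
  case True
  have "mmul (madj (chi2Z q 1)) (chi2Z q 1) (L, M) (L, M) = of_real ((q\<^sup>2) ^ L)"
    unfolding power_even_swap
    by (rule adj_mult_diag_single[where p = "(L, M)"]) (use True in \<open>auto simp: chi2Z_def\<close>)
  moreover have "mmul (madj (chi2Z q 2)) (chi2Z q 2) (L, M) (L, M) = of_real ((q\<^sup>2) ^ M - (q\<^sup>2) ^ Suc L)"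
  proof -
    have "(q ^ M * sqrt (1 - q ^ (2 * (L - M + 1))))\<^sup>2 = (q\<^sup>2) ^ M * (1 - (q\<^sup>2) ^ Suc (L - M))"
      by (simp only: power_mult_distrib sqrt_one_minus_power_sq[OF assms] power_even_swap)
    also have "\<dots> = (q\<^sup>2) ^ M - (q\<^sup>2) ^ Suc L"
      using True by (simp add: right_diff_distrib power_add[symmetric])
    finally have sq: "(q ^ M * sqrt (1 - q ^ (2 * (L - M + 1))))\<^sup>2 = (q\<^sup>2) ^ M - (q\<^sup>2) ^ Suc L" .
    show ?thesis
      unfolding sq[symmetric]
      by (rule adj_mult_diag_single[where p = "(Suc L, M)"]) (use True in \<open>auto simp: chi2Z_def\<close>)
  qed
  moreover have "mmul (madj (chi2Z q 3)) (chi2Z q 3) (L, M) (L, M) = of_real (1 - (q\<^sup>2) ^ Suc M)"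
    unfolding sqrt_one_minus_power_sq[OF assms, symmetric]
    by (rule adj_mult_diag_single[where p = "(Suc L, Suc M)"]) (use True in \<open>auto simp: chi2Z_def\<close>)
  moreover have "b \<notin> {1, 2, 3} \<Longrightarrow> mmul (madj (chi2Z q b)) (chi2Z q b) (L, M) (L, M) = of_real (0\<^sup>2)"
    by (rule adj_mult_diag_single[where p = "(L, M)"]) (auto simp: chi2Z_def)
  ultimately show ?thesis
    using True by (auto simp: phi3_plus_def s5rep_def chi0rep_def Qhigh_def)
next
  case False
  have "mmul (madj (chi2Z q b)) (chi2Z q b) (L, M) (L, M) = of_real (0\<^sup>2)"
    by (rule adj_mult_diag_single[where p = "(L, M)"]) (use False in \<open>auto simp: chi2Z_def\<close>)
  then show ?thesis
    using False by (simp add: phi3_plus_def s5rep_def chi0rep_def Qhigh_def)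
qed

text \<open>The traces of \<open>\<phi>\<^sub>3\<close> are combinations of two double series over the basis \<open>(2l, l+m)\<close>,
  supported on the two sectors.\<close>

definition lower_sector :: "real \<Rightarrow> nat \<times> nat \<Rightarrow> real" where
  "lower_sector s j = (if snd j \<le> fst j then s ^ fst j else 0)"

definition upper_sector :: "real \<Rightarrow> nat \<times> nat \<Rightarrow> real" where
  "upper_sector s j = (if snd j \<le> fst j then 0 else s ^ snd j)"

lemma phi3_diffs:
  assumes "0 < q" "q < 1"
  shows "unit_diff (phi3_plus q) (phi3_minus q) = (\<lambda>j. 0)"
    and "gen_diff (phi3_plus q) (phi3_minus q) b = (\<lambda>j.
      if b = 1 then of_real (lower_sector (q\<^sup>2) j)
      else if b = 2 then of_real (- q\<^sup>2 * lower_sector (q\<^sup>2) j - upper_sector (q\<^sup>2) j)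
      else if b = 3 then of_real (q\<^sup>2 * upper_sector (q\<^sup>2) j) else 0)"
proof -
  show "unit_diff (phi3_plus q) (phi3_minus q) = (\<lambda>j. 0)"
    by (simp add: fun_eq_iff unit_diff_def phi3_plus_def phi3_minus_def s5rep_def)
  show "gen_diff (phi3_plus q) (phi3_minus q) b = (\<lambda>j.
      if b = 1 then of_real (lower_sector (q\<^sup>2) j)
      else if b = 2 then of_real (- q\<^sup>2 * lower_sector (q\<^sup>2) j - upper_sector (q\<^sup>2) j)
      else if b = 3 then of_real (q\<^sup>2 * upper_sector (q\<^sup>2) j) else 0)"
  proof
    fix j :: "nat \<times> nat"
    obtain L M where j: "j = (L, M)" by (cases j)
    show "gen_diff (phi3_plus q) (phi3_minus q) b j = (
      if b = 1 then of_real (lower_sector (q\<^sup>2) j)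
      else if b = 2 then of_real (- q\<^sup>2 * lower_sector (q\<^sup>2) j - upper_sector (q\<^sup>2) j)
      else if b = 3 then of_real (q\<^sup>2 * upper_sector (q\<^sup>2) j) else 0)"
      unfolding j gen_diff_def phi3_plus_diag[OF assms] phi3_minus_diag[OF assms]
      by (simp add: lower_sector_def upper_sector_def)
  qed
qed

text \<open>\<open>\<Sum>\<^sub>L (L+1) s\<^sup>L = 1/(1-s)\<^sup>2\<close>.\<close>
lemma lower_sector_has_sum:
  fixes s :: real assumes "0 \<le> s" "s < 1"
  shows "(lower_sector s has_sum 1 / (1 - s)\<^sup>2) UNIV"
proof -
  have row: "((\<lambda>M. lower_sector s (L, M)) has_sum real (Suc L) * s ^ L) UNIV" for L
    by (rule has_sum_finite_neutralI[of "{..L}"]) (auto simp: lower_sector_def)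
  have "lower_sector s summable_on UNIV \<times> UNIV"
    by (rule summable_on_SigmaI[OF row])
      (use geometric_deriv_has_sum[OF assms] assms in \<open>auto simp: lower_sector_def summable_on_def\<close>)
  then show ?thesis
    using has_sum_SigmaI[OF row geometric_deriv_has_sum[OF assms]] by simp
qed

text \<open>Row \<open>L\<close> contributes the geometric tail \<open>s\<^sup>L\<^sup>+\<^sup>1/(1-s)\<close>.\<close>
lemma upper_sector_has_sum:
  fixes s :: real assumes "0 \<le> s" "s < 1"
  shows "(upper_sector s has_sum s / (1 - s)\<^sup>2) UNIV"
proof -
  have row: "((\<lambda>M. upper_sector s (L, M)) has_sum s / (1 - s) * s ^ L) UNIV" for L
  proof -
    have head: "((\<lambda>M. if M \<le> L then s ^ M else 0) has_sum (\<Sum>M\<le>L. s ^ M)) UNIV"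
      by (rule has_sum_finite_neutralI[of "{..L}"]) auto
    have "(1 - s) * (\<Sum>M\<le>L. s ^ M) = 1 - s ^ Suc L" by (rule sum_gp_basic)
    then have "1 / (1 - s) - (\<Sum>M\<le>L. s ^ M) = s / (1 - s) * s ^ L"
      using assms by (simp add: field_simps)
    moreover have "(\<lambda>M. s ^ M - (if M \<le> L then s ^ M else 0)) = (\<lambda>M. upper_sector s (L, M))"
      by (auto simp: upper_sector_def)
    ultimately show ?thesis
      using has_sum_add[OF geometric_has_sum[OF assms] has_sum_uminusI[OF head]] by simp
  qed
  have col: "((\<lambda>L. s / (1 - s) * s ^ L) has_sum s / (1 - s)\<^sup>2) UNIV"
    using has_sum_cmult_right[OF geometric_has_sum[OF assms], of "s / (1 - s)"]
    by (simp add: power2_eq_square)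
  have "upper_sector s summable_on UNIV \<times> UNIV"
    by (rule summable_on_SigmaI[OF row]) (use col assms in \<open>auto simp: upper_sector_def summable_on_def\<close>)
  then show ?thesis
    using has_sum_SigmaI[OF row col] by simp
qed

lemma phi3_pairing:
  assumes "0 < q" "q < 1" and "diagonal_proj e"
  shows "index_pairing (phi3_plus q) (phi3_minus q) e
    = gen_coeff e 1 * of_real (1 / (1 - q\<^sup>2)\<^sup>2) + gen_coeff e 2 * of_real (- (2 * q\<^sup>2 / (1 - q\<^sup>2)\<^sup>2))
      + gen_coeff e 3 * of_real ((q\<^sup>2)\<^sup>2 / (1 - q\<^sup>2)\<^sup>2)"
proof -
  let ?s = "q\<^sup>2"
  have s: "0 \<le> ?s" "?s < 1" using assms by (simp_all add: power_less_one_iff)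
  have sectors: "((\<lambda>j. of_real (c1 * lower_sector ?s j + c2 * upper_sector ?s j) :: complex) has_sum of_real v) UNIV"
    if "c1 * (1 / (1 - ?s)\<^sup>2) + c2 * (?s / (1 - ?s)\<^sup>2) = v" for c1 c2 v
    unfolding that[symmetric]
    by (intro has_sum_of_real has_sum_add has_sum_cmult_right lower_sector_has_sum[OF s]
        upper_sector_has_sum[OF s])
  let ?T = "\<lambda>b::nat. if b = 1 then of_real (1 / (1 - ?s)\<^sup>2) else if b = 2 then of_real (- (2 * ?s / (1 - ?s)\<^sup>2))
    else if b = 3 then of_real (?s\<^sup>2 / (1 - ?s)\<^sup>2) else 0"
  have "index_pairing (phi3_plus q) (phi3_minus q) e = unit_coeff e * 0 + (\<Sum>b\<in>{1,2,3}. gen_coeff e b * ?T b)"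
  proof (rule index_pairing_diagonal[OF assms(3)])
    show "(unit_diff (phi3_plus q) (phi3_minus q) has_sum 0) UNIV"
      by (simp add: phi3_diffs(1)[OF assms(1,2)])
    have "((\<lambda>j. of_real (1 * lower_sector ?s j + 0 * upper_sector ?s j) :: complex)
        has_sum of_real (1 / (1 - ?s)\<^sup>2)) UNIV"
      by (rule sectors) simp
    moreover have "((\<lambda>j. of_real (- ?s * lower_sector ?s j + (- 1) * upper_sector ?s j) :: complex)
        has_sum of_real (- (2 * ?s / (1 - ?s)\<^sup>2))) UNIV"
      by (rule sectors) (simp add: add_divide_distrib[symmetric])
    moreover have "((\<lambda>j. of_real (0 * lower_sector ?s j + ?s * upper_sector ?s j) :: complex)
        has_sum of_real (?s\<^sup>2 / (1 - ?s)\<^sup>2)) UNIV"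
      by (rule sectors) (simp add: power2_eq_square)
    ultimately show "(gen_diff (phi3_plus q) (phi3_minus q) b has_sum ?T b) UNIV" if "b \<in> {1,2,3}" for b
      using that by (auto simp: phi3_diffs(2)[OF assms(1,2)])
  qed
  then show ?thesis by simp
qed

lemma one_to_three: "{1..3::nat} = {1, 2, 3}"
  by auto

lemma P_one_coeffs:
  "diagonal_proj P_one" "unit_coeff P_one = 1" "gen_coeff P_one b = 0"
  by (simp_all add: diagonal_proj_def unit_coeff_def gen_coeff_def P_one_def one_e_def)

lemma P_plus1_coeffs:
  "diagonal_proj P_plus1" "unit_coeff P_plus1 = 0"
  "gen_coeff P_plus1 1 = 1" "gen_coeff P_plus1 2 = 1" "gen_coeff P_plus1 3 = 1"
  by (auto simp: diagonal_proj_def unit_coeff_def gen_coeff_def P_plus1_def pe_def one_to_three)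

text \<open>The diagonal of \<open>P\<^sub>-\<^sub>1\<close>, rewritten in the \<open>p\<^sub>b\<^sub>b\<close> via the relations of \<open>\<A>(S\<^sup>5\<^sub>q)\<close>.\<close>
lemma P_minus1_coeffs:
  "diagonal_proj (P_minus1 q)" "unit_coeff (P_minus1 q) = 0"
  "gen_coeff (P_minus1 q) 1 = of_real (3 * (q\<^sup>2)\<^sup>2 - 2 * q\<^sup>2)"
  "gen_coeff (P_minus1 q) 2 = of_real (2 * q\<^sup>2 - 1)"
  "gen_coeff (P_minus1 q) 3 = 1"
  by (auto simp: diagonal_proj_def unit_coeff_def gen_coeff_def P_minus1_def zzs_def cm1_def
      escale_def eadd_def pe_def one_to_three one_to_three[unfolded One_nat_def] algebra_simps)
    (simp_all add: power2_eq_square power4_eq_xxxx)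

lemma proj_cases: "proj q 1 = P_one" "proj q 2 = P_minus1 q" "proj q 3 = P_plus1"
  by (simp_all add: proj_def)

text \<open>The rational identities in \<open>s = q\<^sup>2\<close> behind the entries \<open>-1, 1\<close> of row two and \<open>0, 1\<close> of row three.\<close>
lemma pairing_identities:
  fixes s :: real assumes "s \<noteq> 1"
  shows "(2 * s - 1) * (1 / (1 - s)) + - (s / (1 - s)) = -1"
    and "1 / (1 - s) + - (s / (1 - s)) = 1"
    and "(3 * s\<^sup>2 - 2 * s) * (1 / (1 - s)\<^sup>2) + (2 * s - 1) * - (2 * s / (1 - s)\<^sup>2) + s\<^sup>2 / (1 - s)\<^sup>2 = 0"
    and "1 / (1 - s)\<^sup>2 + - (2 * s / (1 - s)\<^sup>2) + s\<^sup>2 / (1 - s)\<^sup>2 = 1"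
proof -
  have d: "1 - s \<noteq> 0" "(1 - s)\<^sup>2 \<noteq> 0" using assms by simp_all
  have "(2 * s - 1) * (1 / (1 - s)) + - (s / (1 - s)) = - (1 - s) / (1 - s)"
    by (simp add: diff_divide_distrib)
  then show "(2 * s - 1) * (1 / (1 - s)) + - (s / (1 - s)) = -1" using d by (simp add: divide_eq_minus_1_iff)
  show "1 / (1 - s) + - (s / (1 - s)) = 1" using d by (simp add: diff_divide_distrib[symmetric])
  have "(3 * s\<^sup>2 - 2 * s) * (1 / (1 - s)\<^sup>2) + (2 * s - 1) * - (2 * s / (1 - s)\<^sup>2) + s\<^sup>2 / (1 - s)\<^sup>2
      = ((3 * s\<^sup>2 - 2 * s) - (2 * s - 1) * (2 * s) + s\<^sup>2) / (1 - s)\<^sup>2"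
    by (simp add: add_divide_distrib diff_divide_distrib)
  also have "(3 * s\<^sup>2 - 2 * s) - (2 * s - 1) * (2 * s) + s\<^sup>2 = 0"
    by (simp add: power2_eq_square algebra_simps)
  finally show "(3 * s\<^sup>2 - 2 * s) * (1 / (1 - s)\<^sup>2) + (2 * s - 1) * - (2 * s / (1 - s)\<^sup>2)
      + s\<^sup>2 / (1 - s)\<^sup>2 = 0" by simp
  have "1 / (1 - s)\<^sup>2 + - (2 * s / (1 - s)\<^sup>2) + s\<^sup>2 / (1 - s)\<^sup>2 = (1 - 2 * s + s\<^sup>2) / (1 - s)\<^sup>2"
    by (simp add: add_divide_distrib diff_divide_distrib)
  also have "1 - 2 * s + s\<^sup>2 = (1 - s)\<^sup>2"
    by (simp add: power2_eq_square algebra_simps)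
  finally show "1 / (1 - s)\<^sup>2 + - (2 * s / (1 - s)\<^sup>2) + s\<^sup>2 / (1 - s)\<^sup>2 = 1" using d by simp
qed

lemma phi1_pairings:
  assumes "j \<in> {1,2,3}"
  shows "index_pairing phi1_plus phi1_minus (proj q j) = 1"
  using assms
  by (auto simp: proj_def phi1_pairing P_one_coeffs P_plus1_coeffs P_minus1_coeffs)

lemma phi2_pairings:
  assumes "0 < q" "q < 1" and "j \<in> {1,2,3}"
  shows "index_pairing (phi2_plus q) phi2_minus (proj q j) = of_int (if j = 1 then 0 else if j = 2 then -1 else 1)"
proof -
  have "q\<^sup>2 < 1" using assms by (simp add: power_less_one_iff)
  then have "q\<^sup>2 \<noteq> 1" by simp
  note data = phi2_pairing[OF assms(1,2)] proj_cases P_one_coeffs P_plus1_coeffs P_minus1_coeffs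
  have "index_pairing (phi2_plus q) phi2_minus (proj q 1) = 0"
    by (simp only: data) simp
  moreover have "index_pairing (phi2_plus q) phi2_minus (proj q 2) = -1"
    by (simp only: data mult_1_left of_real_mult[symmetric] of_real_add[symmetric]
        pairing_identities[OF \<open>q\<^sup>2 \<noteq> 1\<close>]) simp
  moreover have "index_pairing (phi2_plus q) phi2_minus (proj q 3) = 1"
    by (simp only: data mult_1_left of_real_add[symmetric]
        pairing_identities[OF \<open>q\<^sup>2 \<noteq> 1\<close>]) simp
  ultimately show ?thesis using assms(3) by auto
qed

lemma phi3_pairings:
  assumes "0 < q" "q < 1" and "j \<in> {1,2,3}"
  shows "index_pairing (phi3_plus q) (phi3_minus q) (proj q j) = of_int (if j = 3 then 1 else 0)"
proof -
  have "q\<^sup>2 < 1" using assms by (simp add: power_less_one_iff)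
  then have "q\<^sup>2 \<noteq> 1" by simp
  note data = phi3_pairing[OF assms(1,2)] proj_cases P_one_coeffs P_plus1_coeffs P_minus1_coeffs
  have "index_pairing (phi3_plus q) (phi3_minus q) (proj q 1) = 0"
    by (simp only: data) simp
  moreover have "index_pairing (phi3_plus q) (phi3_minus q) (proj q 2) = 0"
    by (simp only: data mult_1_left of_real_mult[symmetric] of_real_add[symmetric]
        pairing_identities[OF \<open>q\<^sup>2 \<noteq> 1\<close>]) simp
  moreover have "index_pairing (phi3_plus q) (phi3_minus q) (proj q 3) = 1"
    by (simp only: data mult_1_left of_real_add[symmetric]
        pairing_identities[OF \<open>q\<^sup>2 \<noteq> 1\<close>]) simp
  ultimately show ?thesis using assms(3) by auto
qed

theorem corollary4p2:
  fixes q :: real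
    and e :: "nat \<Rightarrow> 'k0::ab_group_add"
    and f :: "nat \<Rightarrow> 'k1::ab_group_add"
    and pair :: "'k1 \<Rightarrow> 'k0 \<Rightarrow> int"
  assumes "0 < q" and "q < 1"
    and "iso_Z3 TYPE('k0)" and "iso_Z3 TYPE('k1)"
    and "\<forall>x y z. pair (x + y) z = pair x z + pair y z"
    and "\<forall>x y z. pair x (y + z) = pair x y + pair x z"
    and "\<forall>j\<in>{1,2,3}. of_int (pair (f 1) (e j)) = index_pairing phi1_plus phi1_minus (proj q j)"
    and "\<forall>j\<in>{1,2,3}. of_int (pair (f 2) (e j)) = index_pairing (phi2_plus q) phi2_minus (proj q j)"
    and "\<forall>j\<in>{1,2,3}. of_int (pair (f 3) (e j)) = index_pairing (phi3_plus q) (phi3_minus q) (proj q j)"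
  shows "Zbasis3 (e 1) (e 2) (e 3) \<and> Zbasis3 (f 1) (f 2) (f 3)"
proof (rule dual_bases_from_pairing[OF assms(3-6)])
  fix j :: nat assume j: "j \<in> {1,2,3}"
  show "pair (f 1) (e j) = 1"
    using bspec[OF assms(7) j] phi1_pairings[OF j] by simp
  have "(of_int (pair (f 2) (e j)) :: complex) = of_int (if j = 1 then 0 else if j = 2 then -1 else 1)"
    using bspec[OF assms(8) j] phi2_pairings[OF assms(1,2) j] by (rule trans)
  then show "pair (f 2) (e j) = (if j = 1 then 0 else if j = 2 then -1 else 1)"
    by (simp only: of_int_eq_iff)
  have "(of_int (pair (f 3) (e j)) :: complex) = of_int (if j = 3 then 1 else 0)"
    using bspec[OF assms(9) j] phi3_pairings[OF assms(1,2) j] by (rule trans)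
  then show "pair (f 3) (e j) = (if j = 3 then 1 else 0)"
    by (simp only: of_int_eq_iff)
qed

end
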